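(* Let $\delta>0$ be a constant. Consider single-machine scheduling with all jobs available at time $0$, and suppose all predictions are underestimates, i.e. $\hat p_j \le p_j$ for every job $j$. Then PMLF with parameter $\delta$ is $(2+2\delta)$-competitive for minimizing the total completion time $\sum_j C_j$, and it preempts each job $j$ at most $O\big(\frac{1}{\delta}\log_2(p_j/\hat p_j)\big)$ times.
   Context: There are $n$ jobs, all available at time $0$, on a single machine that processes at most one job at a time at unit speed; preemption is allowed. Job $j$ has an unknown processing requirement $p_j \ge 1$ and completes (at time $C_j$) once it has received $p_j$ units of processing; $p_j$ is learned only at completion. For each job a prediction $\hat p_j>0$ is known in advance. A preemption of job $j$ is an interruption of its processing before it completes. An algorithm is $c$-competitive if on every instance its total completion time is at most $c$ times the minimum total completion time of an offline schedule that knows all $p_j$. PMLF (Predicted Multi-Level Feedback) with parameter $\delta>0$: maintain FIFO queues $Q_k$ indexed by integers $k$. Initially each job $j$ is placed into $Q_k$ with $k=\lfloor \log_{1+\delta}\hat p_j\rfloor$. At any time, the machine processes the front job of the non-empty queue of lowest index. Whenever a job $j\in Q_i$ has received total processing $(1+\delta)^{i+1}$ (without completing), it is removed from $Q_i$ and placed at the end of $Q_{i+1}$. *)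

theory Defs
  imports Complex_Main
begin

text \<open>A (preemptive) schedule is a finite list of consecutive pieces starting at time 0.
  A piece (Some j, d) processes job j for d time units, (None, d) is idle time of length d.\<close>

type_synonym schedule = "(nat option \<times> real) list"

definition seg_start :: "schedule \<Rightarrow> nat \<Rightarrow> real" where
  "seg_start S m = (\<Sum>l<m. snd (S ! l))"

definition seg_end :: "schedule \<Rightarrow> nat \<Rightarrow> real" where
  "seg_end S m = seg_start S m + snd (S ! m)"

definition total_len :: "schedule \<Rightarrow> real" where
  "total_len S = (\<Sum>m<length S. snd (S ! m))"

definition work :: "schedule \<Rightarrow> nat \<Rightarrow> real \<Rightarrow> real" where
  "work S j t = (\<Sum>m<length S. if fst (S ! m) = Some j
       then max 0 (min (snd (S ! m)) (t - seg_start S m)) else 0)"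

definition feasible :: "nat \<Rightarrow> (nat \<Rightarrow> real) \<Rightarrow> schedule \<Rightarrow> bool" where
  "feasible n p S \<longleftrightarrow> (\<forall>m<length S. 0 \<le> snd (S ! m)) \<and> (\<forall>j<n. p j \<le> work S j (total_len S))"

definition completion :: "schedule \<Rightarrow> (nat \<Rightarrow> real) \<Rightarrow> nat \<Rightarrow> real" where
  "completion S p j = Inf {t. 0 \<le> t \<and> p j \<le> work S j t}"

definition total_completion :: "nat \<Rightarrow> (nat \<Rightarrow> real) \<Rightarrow> schedule \<Rightarrow> real" where
  "total_completion n p S = (\<Sum>j<n. completion S p j)"

definition npreempt :: "schedule \<Rightarrow> (nat \<Rightarrow> real) \<Rightarrow> nat \<Rightarrow> nat" where
  "npreempt S p j = card {m. Suc m < length S \<and> fst (S ! m) = Some j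
      \<and> fst (S ! Suc m) \<noteq> Some j \<and> work S j (seg_end S m) < p j}"

text \<open>Initial queues: job j goes to Q_k with k = floor(log_{1+delta} ph_j); within a queue
  jobs are in the (arbitrary) FIFO order given by the list ord.\<close>
definition init_queues :: "real \<Rightarrow> (nat \<Rightarrow> real) \<Rightarrow> nat list \<Rightarrow> (int \<Rightarrow> nat list)" where
  "init_queues \<delta> ph ord = (\<lambda>k. filter (\<lambda>j. \<lfloor>log (1 + \<delta>) (ph j)\<rfloor> = k) ord)"

text \<open>State: queues, processing received so far, schedule built so far.\<close>
type_synonym pstate = "(int \<Rightarrow> nat list) \<times> (nat \<Rightarrow> real) \<times> schedule"

definition pmlf_step :: "real \<Rightarrow> (nat \<Rightarrow> real) \<Rightarrow> pstate \<Rightarrow> pstate" where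
  "pmlf_step \<delta> p st = (case st of (Q, r, S) \<Rightarrow>
     if \<forall>i. Q i = [] then (Q, r, S) else
     (let i = Min {i. Q i \<noteq> []}; j = hd (Q i); thr = (1 + \<delta>) powr real_of_int (i + 1) in
      if p j \<le> thr
      then (Q(i := tl (Q i)), r(j := p j), S @ [(Some j, p j - r j)])
      else (Q(i := tl (Q i), i + 1 := Q (i + 1) @ [j]), r(j := thr), S @ [(Some j, thr - r j)])))"

definition pmlf_state :: "real \<Rightarrow> (nat \<Rightarrow> real) \<Rightarrow> (nat \<Rightarrow> real) \<Rightarrow> nat list \<Rightarrow> nat \<Rightarrow> pstate" where
  "pmlf_state \<delta> p ph ord k = (pmlf_step \<delta> p ^^ k) (init_queues \<delta> ph ord, \<lambda>_. 0, [])"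

definition pmlf_done :: "pstate \<Rightarrow> bool" where
  "pmlf_done st \<longleftrightarrow> (\<forall>i. fst st i = [])"

definition pmlf_sched :: "pstate \<Rightarrow> schedule" where
  "pmlf_sched st = snd (snd st)"

end

(*
  Any feasible schedule satisfies 2 * sum_j C_j >= sum_(j,k) min(p_j, p_k) + sum_j p_j, since of two
  jobs the one completing later has by then received all the processing of the other. PMLF never
  idles, so 2 * sum_j C_j = sum_(j,k) (w_k(C_j) + w_j(C_k)), where w_k(t) is the processing job k
  has received by time t. When a job j completes it heads the lowest nonempty queue Q_i, so every
  unfinished job k has received at most (1+delta)^(i+1) <= (1+delta) p_j, while
  p_j <= (1+delta)^(i+1) <= (1+delta) p_k. Hence every pair contributes at most
  (2+delta) min(p_j, p_k), and PMLF is even (2+delta)-competitive.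

  A job enters Q_l only if (1+delta)^l <= p_j: initially because ph_j <= p_j, later because it is
  demoted to Q_(l+1) only when p_j > (1+delta)^(l+1). So it is demoted, and hence preempted, at
  most log_(1+delta) p_j - floor(log_(1+delta) ph_j) <= log_(1+delta) (p_j / ph_j) + 1 times.
*)
theory Submission
  imports Defs "HOL-Analysis.Elementary_Metric_Spaces"
begin

lemma pair_work_bound:
  fixes wj wk pj pk c :: real
  assumes "wk \<le> min pk (c * pj)" "wj \<le> pj" "pj \<le> c * pk"
  shows "wk + wj \<le> (1 + c) * min pj pk"
proof -
  have "wk \<le> pk" "wk \<le> c * pj" using assms(1) by simp_all
  then show ?thesis using assms(2,3) by (cases "pj \<le> pk") (simp_all add: min_def algebra_simps)
qed

lemma log_le_log2:
  assumes "0 < \<delta>" "1 \<le> x"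
  shows "log (1 + \<delta>) x \<le> (1 + \<delta>) * (log 2 x / \<delta>)"
proof -
  have "ln (1 / (1 + \<delta>)) \<le> 1 / (1 + \<delta>) - 1" using assms by (intro ln_le_minus_one) simp
  then have ln_ge: "\<delta> / (1 + \<delta>) \<le> ln (1 + \<delta>)"
    using assms by (simp add: ln_div field_simps)
  have "ln 2 \<le> (1::real)" using ln_le_minus_one[of 2] by simp
  then have ln_le: "ln x \<le> ln x / ln 2" using assms by (simp add: le_divide_eq mult_left_le)
  have "log (1 + \<delta>) x = ln x / ln (1 + \<delta>)" by (simp add: log_def)
  also have "\<dots> \<le> ln x / (\<delta> / (1 + \<delta>))"
    using ln_ge assms by (intro divide_left_mono) auto
  also have "\<dots> = (1 + \<delta>) * (ln x / \<delta>)" by simp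
  also have "\<dots> \<le> (1 + \<delta>) * ((ln x / ln 2) / \<delta>)"
    using ln_le assms by (intro mult_left_mono divide_right_mono) auto
  also have "\<dots> = (1 + \<delta>) * (log 2 x / \<delta>)" by (simp add: log_def)
  finally show ?thesis .
qed

section \<open>Schedules\<close>

definition prefix_work :: "schedule \<Rightarrow> nat \<Rightarrow> nat \<Rightarrow> real" where
  "prefix_work S x M = (\<Sum>m<M. if fst (S!m) = Some x then snd (S!m) else 0)"

definition unfinished_pieces :: "schedule \<Rightarrow> (nat \<Rightarrow> real) \<Rightarrow> nat \<Rightarrow> nat" where
  "unfinished_pieces S p x =
     card {m. m < length S \<and> fst (S!m) = Some x \<and> prefix_work S x (Suc m) < p x}"

definition nonneg_pieces :: "schedule \<Rightarrow> bool" where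
  "nonneg_pieces S \<longleftrightarrow> (\<forall>m<length S. 0 \<le> snd (S!m))"

definition idle_free :: "nat \<Rightarrow> schedule \<Rightarrow> bool" where
  "idle_free n S \<longleftrightarrow> nonneg_pieces S \<and> (\<forall>m<length S. \<exists>x<n. fst (S!m) = Some x)"

lemma seg_start_Suc: "seg_start S (Suc m) = seg_start S m + snd (S!m)"
  by (simp add: seg_start_def)

lemma total_len_eq_seg_start: "total_len S = seg_start S (length S)"
  by (simp add: total_len_def seg_start_def)

lemma seg_start_mono:
  assumes "nonneg_pieces S" "m \<le> M" "M \<le> length S"
  shows "seg_start S m \<le> seg_start S M"
proof -
  have "seg_start S M = seg_start S m + (\<Sum>l\<in>{m..<M}. snd (S!l))"
    unfolding seg_start_def using assms(2)
    by (metis sum.lessThan_Suc_shift lessThan_atLeast0 sum.atLeastLessThan_concat zero_le)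
  moreover have "0 \<le> (\<Sum>l\<in>{m..<M}. snd (S!l))"
    using assms by (intro sum_nonneg) (auto simp: nonneg_pieces_def)
  ultimately show ?thesis by simp
qed

lemma seg_start_nonneg: "nonneg_pieces S \<Longrightarrow> M \<le> length S \<Longrightarrow> 0 \<le> seg_start S M"
  using seg_start_mono[of S 0 M] by (simp add: seg_start_def)

lemma total_len_nonneg: "nonneg_pieces S \<Longrightarrow> 0 \<le> total_len S"
  by (simp add: total_len_eq_seg_start seg_start_nonneg)

lemma work_seg_start:
  assumes "nonneg_pieces S" "M \<le> length S"
  shows "work S x (seg_start S M) = prefix_work S x M"
proof -
  have piece: "max 0 (min (snd (S!m)) (seg_start S M - seg_start S m)) = (if m < M then snd (S!m) else 0)"
    if "m < length S" for m
  proof -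
    have "0 \<le> snd (S!m)" using assms(1) that by (simp add: nonneg_pieces_def)
    moreover have "m < M \<Longrightarrow> seg_start S (Suc m) \<le> seg_start S M"
      using assms by (intro seg_start_mono) auto
    moreover have "\<not> m < M \<Longrightarrow> seg_start S M \<le> seg_start S m"
      using assms that by (intro seg_start_mono) auto
    ultimately show ?thesis by (auto simp: seg_start_Suc)
  qed
  have "work S x (seg_start S M) = (\<Sum>m<length S. if m < M \<and> fst (S!m) = Some x then snd (S!m) else 0)"
    unfolding work_def by (intro sum.cong) (auto simp: piece)
  also have "\<dots> = prefix_work S x M"
    unfolding prefix_work_def using assms(2)
    by (intro sum.mono_neutral_cong_right) auto
  finally show ?thesis .
qed

lemma work_nonneg: "0 \<le> work S x t"
  unfolding work_def by (intro sum_nonneg) auto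

lemma work_mono: "t \<le> t' \<Longrightarrow> work S x t \<le> work S x t'"
  unfolding work_def by (intro sum_mono) auto

lemma work_le_prefix_work: "nonneg_pieces S \<Longrightarrow> work S x t \<le> prefix_work S x (length S)"
  unfolding work_def prefix_work_def nonneg_pieces_def by (intro sum_mono) auto

lemma continuous_on_work: "continuous_on UNIV (work S x)"
  unfolding work_def
proof (intro continuous_intros)
  fix m
  show "continuous_on UNIV (\<lambda>t. if fst (S!m) = Some x
          then max 0 (min (snd (S!m)) (t - seg_start S m)) else 0)"
    by (cases "fst (S!m) = Some x") (auto intro!: continuous_intros)
qed

lemma sum_clamped_pieces:
  assumes "nonneg_pieces S" "M \<le> length S" "0 \<le> t"
  shows "(\<Sum>m<M. max 0 (min (snd (S!m)) (t - seg_start S m))) = min (seg_start S M) t"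
  using assms(2)
proof (induction M)
  case 0 then show ?case using assms(3) by (simp add: seg_start_def)
next
  case (Suc M)
  have "0 \<le> snd (S!M)" using Suc.prems assms(1) by (simp add: nonneg_pieces_def)
  then show ?case using Suc by (auto simp: seg_start_Suc)
qed

lemma sum_work_eq_sum_pieces:
  "(\<Sum>k<n. work S k t) = (\<Sum>m<length S.
     if \<exists>k<n. fst (S!m) = Some k then max 0 (min (snd (S!m)) (t - seg_start S m)) else 0)"
  unfolding work_def
  by (subst sum.swap, intro sum.cong refl, rename_tac m, case_tac "fst (S!m)") auto

lemma sum_work_le:
  assumes "nonneg_pieces S" "0 \<le> t"
  shows "(\<Sum>k<n. work S k t) \<le> t"
proof -
  have "(\<Sum>k<n. work S k t) \<le> (\<Sum>m<length S. max 0 (min (snd (S!m)) (t - seg_start S m)))"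
    unfolding sum_work_eq_sum_pieces by (intro sum_mono) auto
  also have "\<dots> = min (seg_start S (length S)) t"
    using assms by (intro sum_clamped_pieces) auto
  finally show ?thesis by simp
qed

lemma sum_work_eq_idle_free:
  assumes "idle_free n S" "0 \<le> t"
  shows "(\<Sum>k<n. work S k t) = min (total_len S) t"
  using assms sum_clamped_pieces[of S "length S" t]
  unfolding sum_work_eq_sum_pieces idle_free_def total_len_eq_seg_start by simp

lemma prefix_work_append: "M \<le> length S \<Longrightarrow> prefix_work (S @ ys) x M = prefix_work S x M"
  unfolding prefix_work_def by (intro sum.cong) (auto simp: nth_append)

lemma prefix_work_snoc:
  "prefix_work (S @ [e]) x (Suc (length S)) =
   prefix_work S x (length S) + (if fst e = Some x then snd e else 0)"
  using prefix_work_append[of "length S" S "[e]" x] by (simp add: prefix_work_def)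

lemma unfinished_pieces_snoc:
  "unfinished_pieces (S @ [e]) p x = unfinished_pieces S p x +
     (if fst e = Some x \<and> prefix_work S x (length S) + snd e < p x then 1 else 0)"
proof -
  let ?A = "{m. m < length S \<and> fst (S!m) = Some x \<and> prefix_work S x (Suc m) < p x}"
  have "{m. m < length (S @ [e]) \<and> fst ((S @ [e])!m) = Some x \<and> prefix_work (S @ [e]) x (Suc m) < p x}
      = ?A \<union> (if fst e = Some x \<and> prefix_work S x (length S) + snd e < p x then {length S} else {})"
    using prefix_work_snoc[of S e x]
    by (auto simp: nth_append prefix_work_append less_Suc_eq Suc_le_eq)
  then show ?thesis unfolding unfinished_pieces_def by (auto simp: card_insert_if)
qed

lemma npreempt_le_unfinished_pieces:
  assumes "nonneg_pieces S"
  shows "npreempt S p j \<le> unfinished_pieces S p j"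
  unfolding npreempt_def unfinished_pieces_def
proof (intro card_mono subsetI)
  fix m
  assume "m \<in> {m. Suc m < length S \<and> fst (S!m) = Some j \<and> fst (S ! Suc m) \<noteq> Some j
                   \<and> work S j (seg_end S m) < p j}"
  moreover have "seg_end S m = seg_start S (Suc m)" by (simp add: seg_end_def seg_start_Suc)
  ultimately show "m \<in> {m. m < length S \<and> fst (S!m) = Some j \<and> prefix_work S j (Suc m) < p j}"
    using work_seg_start[OF assms, of "Suc m" j] by auto
qed simp

lemma
  assumes "0 \<le> t" "p j \<le> work S j t"
  shows completion_le: "completion S p j \<le> t"
    and completion_nonneg: "0 \<le> completion S p j"
  unfolding completion_def using assms
  by (auto intro!: cInf_lower cInf_greatest bdd_belowI[where m=0])

lemma work_completion:
  assumes "0 \<le> t" "p j \<le> work S j t"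
  shows "p j \<le> work S j (completion S p j)"
proof -
  have "closed {t. 0 \<le> t \<and> p j \<le> work S j t}"
    using continuous_on_work[of S j]
    by (intro closed_Collect_conj closed_Collect_le) (auto intro: continuous_intros continuous_on_subset)
  then have "Inf {t. 0 \<le> t \<and> p j \<le> work S j t} \<in> {t. 0 \<le> t \<and> p j \<le> work S j t}"
    using assms by (intro closed_contains_Inf) (auto intro!: bdd_belowI[where m=0])
  then show ?thesis unfolding completion_def by auto
qed

section \<open>The SPT bound\<close>

text \<open>Twice the total completion time of the shortest-processing-time-first schedule.\<close>
definition spt_bound :: "nat \<Rightarrow> (nat \<Rightarrow> real) \<Rightarrow> real" where
  "spt_bound n p = (\<Sum>j<n. \<Sum>k<n. min (p j) (p k) + (if j = k then p j else 0))"

lemma sum_sum_add_swap: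
  "(\<Sum>j<n. \<Sum>k<n. f j k + f k j) = 2 * (\<Sum>j<(n::nat). \<Sum>k<n. (f j k :: real))"
  by (simp add: sum.distrib sum.swap[of "\<lambda>j k. f k j"])

lemma total_completion_nonneg: "feasible n p S \<Longrightarrow> 0 \<le> total_completion n p S"
  unfolding total_completion_def feasible_def
  by (intro sum_nonneg completion_nonneg[of "total_len S"])
    (auto intro: total_len_nonneg simp: nonneg_pieces_def)

lemma spt_bound_le_total_completion:
  assumes feas: "feasible n p S"
  shows "spt_bound n p \<le> 2 * total_completion n p S"
proof -
  define C where "C j = completion S p j" for j
  have nn: "nonneg_pieces S" using feas by (simp add: feasible_def nonneg_pieces_def)
  have completed: "p j \<le> work S j (C j)" "0 \<le> C j" if "j < n" for j
    unfolding C_def using feas that total_len_nonneg[OF nn]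
    by (auto intro: work_completion completion_nonneg simp: feasible_def)
  have pair: "min (p j) (p k) + (if j = k then p j else 0) \<le> work S k (C j) + work S j (C k)"
    if "j < n" "k < n" for j k
    using completed[OF that(1)] completed[OF that(2)] work_nonneg[of S k "C j"] work_nonneg[of S j "C k"]
      work_mono[of "C j" "C k" S j] work_mono[of "C k" "C j" S k]
    by (cases "C j \<le> C k") auto
  have "spt_bound n p \<le> (\<Sum>j<n. \<Sum>k<n. work S k (C j) + work S j (C k))"
    unfolding spt_bound_def by (intro sum_mono) (simp add: pair)
  also have "\<dots> = 2 * (\<Sum>j<n. \<Sum>k<n. work S k (C j))"
    by (rule sum_sum_add_swap)
  also have "\<dots> \<le> 2 * (\<Sum>j<n. C j)"
    using sum_work_le[OF nn] completed(2) by (auto intro!: sum_mono)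
  finally show ?thesis by (simp add: total_completion_def C_def)
qed

lemma total_completion_le_spt_bound:
  assumes idle_free: "idle_free n S"
    and complete: "\<forall>j<n. p j \<le> work S j (total_len S)"
    and work_le: "\<forall>j<n. \<forall>t. work S j t \<le> p j"
    and pair: "\<forall>j<n. \<forall>k<n. j \<noteq> k \<longrightarrow>
       work S k (completion S p j) + work S j (completion S p k) \<le> c * min (p j) (p k)"
    and "1 \<le> c" and p_nonneg: "\<forall>j<n. 0 \<le> p j"
  shows "2 * total_completion n p S \<le> c * spt_bound n p"
proof -
  define C where "C j = completion S p j" for j
  have nn: "nonneg_pieces S" using idle_free by (simp add: idle_free_def)
  have C: "C j \<le> total_len S" "0 \<le> C j" if "j < n" for j
    unfolding C_def using complete that total_len_nonneg[OF nn] completion_le completion_nonneg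
    by auto
  have sum_work: "(\<Sum>k<n. work S k (C j)) = C j" if "j < n" for j
    using sum_work_eq_idle_free[OF idle_free C(2)[OF that]] C[OF that] by simp
  have term_le: "work S k (C j) + work S j (C k) \<le> c * (min (p j) (p k) + (if j = k then p j else 0))"
    if "j < n" "k < n" for j k
  proof (cases "j = k")
    case True
    have "work S j (C j) \<le> p j" using work_le that by blast
    also have "\<dots> \<le> c * p j"
      using p_nonneg that \<open>1 \<le> c\<close> mult_right_mono[of 1 c "p j"] by simp
    finally have "work S j (C j) \<le> c * p j" .
    then show ?thesis using True by (simp add: algebra_simps)
  next
    case False
    then show ?thesis using pair that unfolding C_def by auto
  qed
  have "2 * total_completion n p S = 2 * (\<Sum>j<n. \<Sum>k<n. work S k (C j))"
    unfolding total_completion_def C_def[symmetric] using sum_work by simp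
  also have "\<dots> = (\<Sum>j<n. \<Sum>k<n. work S k (C j) + work S j (C k))"
    by (rule sum_sum_add_swap[symmetric])
  also have "\<dots> \<le> (\<Sum>j<n. \<Sum>k<n. c * (min (p j) (p k) + (if j = k then p j else 0)))"
    by (intro sum_mono) (simp add: term_le)
  also have "\<dots> = c * spt_bound n p"
    unfolding spt_bound_def by (simp add: sum_distrib_left)
  finally show ?thesis .
qed

section \<open>Multi-level queues\<close>

abbreviation level_bound :: "real \<Rightarrow> int \<Rightarrow> real" where
  "level_bound \<delta> l \<equiv> (1 + \<delta>) powr real_of_int l"

lemma level_bound_mono: "0 \<le> \<delta> \<Longrightarrow> l \<le> l' \<Longrightarrow> level_bound \<delta> l \<le> level_bound \<delta> l'"
  by (intro powr_mono) auto

lemma level_bound_succ: "0 \<le> \<delta> \<Longrightarrow> level_bound \<delta> (l + 1) = (1 + \<delta>) * level_bound \<delta> l"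
  by (simp add: powr_add)

definition initial_level :: "real \<Rightarrow> (nat \<Rightarrow> real) \<Rightarrow> nat \<Rightarrow> int" where
  "initial_level \<delta> ph x = \<lfloor>log (1 + \<delta>) (ph x)\<rfloor>"

definition queues_wf :: "('k \<Rightarrow> 'a list) \<Rightarrow> bool" where
  "queues_wf Q \<longleftrightarrow> (\<forall>l. distinct (Q l)) \<and> (\<forall>l l' x. x \<in> set (Q l) \<longrightarrow> x \<in> set (Q l') \<longrightarrow> l = l')"

abbreviation queued :: "('k \<Rightarrow> 'a list) \<Rightarrow> 'a \<Rightarrow> bool" where
  "queued Q x \<equiv> \<exists>l. x \<in> set (Q l)"

lemma queue_head_notin_other:
  "queues_wf Q \<Longrightarrow> Q i \<noteq> [] \<Longrightarrow> k \<noteq> i \<Longrightarrow> hd (Q i) \<notin> set (Q k)"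
  unfolding queues_wf_def by (meson list.set_sel(1))

lemma set_pop_queue:
  assumes "queues_wf Q" "Q i \<noteq> []"
  shows "set ((Q(i := tl (Q i))) l) = set (Q l) - {hd (Q i)}"
proof (cases "l = i")
  case True
  have "distinct (hd (Q i) # tl (Q i))" using assms by (simp add: queues_wf_def)
  moreover have "set (Q i) = insert (hd (Q i)) (set (tl (Q i)))"
    using assms(2) by (metis list.collapse list.simps(15))
  ultimately show ?thesis using True by auto
next
  case False
  then show ?thesis using queue_head_notin_other[OF assms False] by simp
qed

lemma queues_wf_pop:
  assumes "queues_wf Q" "Q i \<noteq> []"
  shows "queues_wf (Q(i := tl (Q i)))"
  using assms(1) set_pop_queue[OF assms] unfolding queues_wf_def
  by (metis DiffD1 distinct_tl fun_upd_apply)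

lemma set_move_queue_head:
  assumes "queues_wf Q" "Q i \<noteq> []" "k \<noteq> i"
  shows "set ((Q(i := tl (Q i), k := Q k @ [hd (Q i)])) l) =
    set (Q l) - {hd (Q i)} \<union> (if l = k then {hd (Q i)} else {})"
proof (cases "l = k")
  case True
  then show ?thesis using queue_head_notin_other[OF assms] by auto
next
  case False
  then show ?thesis using set_pop_queue[OF assms(1,2), of l] by simp
qed

lemma queues_wf_move:
  assumes "queues_wf Q" "Q i \<noteq> []" "k \<noteq> i"
  shows "queues_wf (Q(i := tl (Q i), k := Q k @ [hd (Q i)]))"
proof -
  let ?Q' = "Q(i := tl (Q i), k := Q k @ [hd (Q i)])"
  have "distinct (?Q' l)" for l
  proof -
    have "distinct ((Q(i := tl (Q i))) l)" "distinct (Q k)"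
      using queues_wf_pop[OF assms(1,2)] assms(1) unfolding queues_wf_def by blast+
    then show ?thesis using queue_head_notin_other[OF assms] by simp
  qed
  moreover have "l = l'" if "x \<in> set (?Q' l)" "x \<in> set (?Q' l')" for x l l'
  proof (cases "x = hd (Q i)")
    case True
    then show ?thesis using that unfolding set_move_queue_head[OF assms] by (simp split: if_splits)
  next
    case False
    then have "x \<in> set (Q l)" "x \<in> set (Q l')"
      using that unfolding set_move_queue_head[OF assms] by (simp_all split: if_splits)
    then show ?thesis using assms(1) unfolding queues_wf_def by blast
  qed
  ultimately show ?thesis unfolding queues_wf_def by blast
qed

lemma queued_pop_queue:
  assumes "queues_wf Q" "Q i \<noteq> []"
  shows "queued (Q(i := tl (Q i))) x \<longleftrightarrow> queued Q x \<and> x \<noteq> hd (Q i)"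
  using set_pop_queue[OF assms] hd_in_set[OF assms(2)] by blast

lemma queued_move_queue_head:
  assumes "queues_wf Q" "Q i \<noteq> []" "k \<noteq> i"
  shows "queued (Q(i := tl (Q i), k := Q k @ [hd (Q i)])) x \<longleftrightarrow> queued Q x"
proof
  assume "queued (Q(i := tl (Q i), k := Q k @ [hd (Q i)])) x"
  then obtain l where "x \<in> set ((Q(i := tl (Q i), k := Q k @ [hd (Q i)])) l)" by blast
  then show "queued Q x"
    using hd_in_set[OF assms(2)] unfolding set_move_queue_head[OF assms] by (auto split: if_splits)
next
  assume "queued Q x"
  then obtain l where "x \<in> set (Q l)" by blast
  then have "x \<in> set ((Q(i := tl (Q i), k := Q k @ [hd (Q i)])) (if x = hd (Q i) then k else l))"
    unfolding set_move_queue_head[OF assms] by auto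
  then show "queued (Q(i := tl (Q i), k := Q k @ [hd (Q i)])) x" by blast
qed

text \<open>
  A queued job's level is its initial level plus its number of demotions,
  which are the pieces after which it was unfinished.\<close>
definition pmlf_queue_inv ::
    "real \<Rightarrow> (nat \<Rightarrow> real) \<Rightarrow> (nat \<Rightarrow> real) \<Rightarrow> nat \<Rightarrow> (int \<Rightarrow> nat list) \<Rightarrow> (nat \<Rightarrow> real) \<Rightarrow> schedule \<Rightarrow> bool"
  where
  "pmlf_queue_inv \<delta> p ph n Q r S \<longleftrightarrow>
    queues_wf Q \<and> finite {l. Q l \<noteq> []} \<and>
    (\<forall>l x. x \<in> set (Q l) \<longrightarrow> x < n \<and> level_bound \<delta> l \<le> p x \<and> r x \<le> level_bound \<delta> l \<and> r x < p x
        \<and> int (unfinished_pieces S p x) + initial_level \<delta> ph x = l) \<and>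
    (\<forall>x<n. \<not> queued Q x \<longrightarrow> r x = p x) \<and>
    (\<forall>l x y. x \<in> set (Q l) \<longrightarrow> queued Q y \<longrightarrow> r y \<le> level_bound \<delta> (l + 1))"

definition pmlf_account_inv ::
    "real \<Rightarrow> (nat \<Rightarrow> real) \<Rightarrow> (nat \<Rightarrow> real) \<Rightarrow> nat \<Rightarrow> (int \<Rightarrow> nat list) \<Rightarrow> (nat \<Rightarrow> real) \<Rightarrow> schedule \<Rightarrow> bool"
  where
  "pmlf_account_inv \<delta> p ph n Q r S \<longleftrightarrow>
    idle_free n S \<and>
    (\<forall>x. r x = prefix_work S x (length S)) \<and>
    (\<forall>x<n. int (unfinished_pieces S p x) + initial_level \<delta> ph x \<le> log (1 + \<delta>) (p x)) \<and>
    length S = (\<Sum>x<n. unfinished_pieces S p x + (if queued Q x then 0 else 1))"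

definition pmlf_inv ::
    "real \<Rightarrow> (nat \<Rightarrow> real) \<Rightarrow> (nat \<Rightarrow> real) \<Rightarrow> nat \<Rightarrow> (int \<Rightarrow> nat list) \<Rightarrow> (nat \<Rightarrow> real) \<Rightarrow> schedule \<Rightarrow> bool"
  where
  "pmlf_inv \<delta> p ph n Q r S \<longleftrightarrow> pmlf_queue_inv \<delta> p ph n Q r S \<and> pmlf_account_inv \<delta> p ph n Q r S"

lemma
  assumes "pmlf_inv \<delta> p ph n Q r S"
  shows pmlf_inv_queues_wf: "queues_wf Q"
    and pmlf_inv_finite: "finite {l. Q l \<noteq> []}"
    and pmlf_inv_queued: "x \<in> set (Q l) \<Longrightarrow> x < n \<and> level_bound \<delta> l \<le> p x \<and> r x \<le> level_bound \<delta> l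
        \<and> r x < p x \<and> int (unfinished_pieces S p x) + initial_level \<delta> ph x = l"
    and pmlf_inv_finished: "x < n \<Longrightarrow> \<not> queued Q x \<Longrightarrow> r x = p x"
    and pmlf_inv_received: "x \<in> set (Q l) \<Longrightarrow> queued Q y \<Longrightarrow> r y \<le> level_bound \<delta> (l + 1)"
    and pmlf_inv_idle_free: "idle_free n S"
    and pmlf_inv_prefix_work: "r x = prefix_work S x (length S)"
    and pmlf_inv_level_le_log:
      "x < n \<Longrightarrow> int (unfinished_pieces S p x) + initial_level \<delta> ph x \<le> log (1 + \<delta>) (p x)"
    and pmlf_inv_length:
      "length S = (\<Sum>x<n. unfinished_pieces S p x + (if queued Q x then 0 else 1))"
  using assms unfolding pmlf_inv_def pmlf_queue_inv_def pmlf_account_inv_def by blast+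

lemma pmlf_inv_init:
  assumes "\<delta> > 0" "\<forall>j<n. 1 \<le> p j \<and> 0 < ph j \<and> ph j \<le> p j" "distinct ord" "set ord = {..<n}"
  shows "pmlf_inv \<delta> p ph n (init_queues \<delta> ph ord) (\<lambda>_. 0) []"
proof -
  let ?Q = "init_queues \<delta> ph ord"
  have set_Q: "x \<in> set (?Q l) \<longleftrightarrow> x < n \<and> initial_level \<delta> ph x = l" for x l
    using assms(4) by (auto simp: init_queues_def initial_level_def)
  have log_le: "initial_level \<delta> ph x \<le> log (1 + \<delta>) (ph x)" "log (1 + \<delta>) (ph x) \<le> log (1 + \<delta>) (p x)"
    if "x < n" for x
    using assms that unfolding initial_level_def by (auto simp: log_le_cancel_iff)
  have level_le: "level_bound \<delta> (initial_level \<delta> ph x) \<le> p x" if "x < n" for x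
  proof -
    have "level_bound \<delta> (initial_level \<delta> ph x) \<le> (1 + \<delta>) powr (log (1 + \<delta>) (ph x))"
      using log_le(1)[OF that] assms(1) by (intro powr_mono) auto
    also have "\<dots> = ph x" using assms(1,2) that by simp
    finally show ?thesis using assms(2) that by force
  qed
  have "{l. ?Q l \<noteq> []} \<subseteq> initial_level \<delta> ph ` {..<n}"
  proof
    fix l assume "l \<in> {l. ?Q l \<noteq> []}"
    then have "hd (?Q l) \<in> set (?Q l)" by simp
    then show "l \<in> initial_level \<delta> ph ` {..<n}" unfolding set_Q by force
  qed
  then have "finite {l. ?Q l \<noteq> []}" by (rule finite_subset) simp
  moreover have "queues_wf ?Q"
    unfolding queues_wf_def using assms(3) by (simp add: set_Q) (simp add: init_queues_def)
  moreover have "x < n \<and> level_bound \<delta> l \<le> p x \<and> 0 < p x" if "x \<in> set (?Q l)" for x l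
    using that level_le assms(2) unfolding set_Q by force
  ultimately have "pmlf_queue_inv \<delta> p ph n ?Q (\<lambda>_. 0) []"
    unfolding pmlf_queue_inv_def by (simp add: set_Q unfinished_pieces_def)
  moreover have "pmlf_account_inv \<delta> p ph n ?Q (\<lambda>_. 0) []"
    using log_le by (force simp: pmlf_account_inv_def idle_free_def nonneg_pieces_def prefix_work_def
        unfinished_pieces_def set_Q)
  ultimately show ?thesis unfolding pmlf_inv_def ..
qed

lemma pmlf_step_cases:
  assumes "finite {l. Q l \<noteq> []}" "\<exists>l. Q l \<noteq> []"
  obtains i j where "Q i \<noteq> []" "j = hd (Q i)" "\<forall>l. Q l \<noteq> [] \<longrightarrow> i \<le> l"
      "p j \<le> level_bound \<delta> (i + 1)"
      "pmlf_step \<delta> p (Q, r, S) = (Q(i := tl (Q i)), r(j := p j), S @ [(Some j, p j - r j)])"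
  | i j where "Q i \<noteq> []" "j = hd (Q i)" "\<forall>l. Q l \<noteq> [] \<longrightarrow> i \<le> l"
      "level_bound \<delta> (i + 1) < p j"
      "pmlf_step \<delta> p (Q, r, S) = (Q(i := tl (Q i), i + 1 := Q (i + 1) @ [j]),
         r(j := level_bound \<delta> (i + 1)), S @ [(Some j, level_bound \<delta> (i + 1) - r j)])"
proof -
  define i where "i = Min {l. Q l \<noteq> []}"
  have i: "Q i \<noteq> []" "\<forall>l. Q l \<noteq> [] \<longrightarrow> i \<le> l"
    using Min_in[OF assms(1)] Min_le[OF assms(1)] assms(2) unfolding i_def by auto
  have "pmlf_step \<delta> p (Q, r, S) = (if p (hd (Q i)) \<le> level_bound \<delta> (i + 1)
      then (Q(i := tl (Q i)), r(hd (Q i) := p (hd (Q i))), S @ [(Some (hd (Q i)), p (hd (Q i)) - r (hd (Q i)))])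
      else (Q(i := tl (Q i), i + 1 := Q (i + 1) @ [hd (Q i)]), r(hd (Q i) := level_bound \<delta> (i + 1)),
        S @ [(Some (hd (Q i)), level_bound \<delta> (i + 1) - r (hd (Q i)))]))"
    using assms(2) unfolding pmlf_step_def Let_def i_def by simp
  then show ?thesis
    using that i by (cases "p (hd (Q i)) \<le> level_bound \<delta> (i + 1)") auto
qed

lemma idle_free_snoc: "idle_free n S \<Longrightarrow> j < n \<Longrightarrow> 0 \<le> d \<Longrightarrow> idle_free n (S @ [(Some j, d)])"
  by (auto simp: idle_free_def nonneg_pieces_def nth_append less_Suc_eq)

lemma prefix_work_step:
  assumes "\<And>x. r x = prefix_work S x (length S)"
  shows "(r(j := v)) x = prefix_work (S @ [(Some j, v - r j)]) x (length (S @ [(Some j, v - r j)]))"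
  using assms by (simp add: prefix_work_snoc)

lemma unfinished_pieces_step:
  assumes "r j = prefix_work S j (length S)"
  shows "unfinished_pieces (S @ [(Some j, v - r j)]) p x =
    unfinished_pieces S p x + (if x = j \<and> v < p j then 1 else 0)"
  using assms by (cases "x = j") (simp_all add: unfinished_pieces_snoc)

lemma length_snoc_sum:
  fixes n j :: nat
  assumes "length S = (\<Sum>x<n. f x)" "j < n" "\<And>x. g x = f x + (if x = j then 1 else 0)"
  shows "length (S @ [e]) = (\<Sum>x<n. g x)"
proof -
  have "(\<Sum>x<n. g x) = (\<Sum>x<n. f x) + (\<Sum>x<n. if x = j then 1 else 0)"
    by (simp add: assms(3) sum.distrib)
  then show ?thesis using assms(1,2) by (simp add: sum.delta)
qed

lemma pmlf_queue_inv_complete: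
  assumes inv: "pmlf_inv \<delta> p ph n Q r S" and "Q i \<noteq> []" "j = hd (Q i)"
  shows "pmlf_queue_inv \<delta> p ph n (Q(i := tl (Q i))) (r(j := p j)) (S @ [(Some j, p j - r j)])"
proof -
  let ?Q = "Q(i := tl (Q i))" and ?r = "r(j := p j)" and ?S = "S @ [(Some j, p j - r j)]"
  have set_Q: "set (?Q l) = set (Q l) - {j}" for l
    using set_pop_queue[OF pmlf_inv_queues_wf[OF inv] \<open>Q i \<noteq> []\<close>] \<open>j = hd (Q i)\<close> by simp
  have queued: "queued ?Q x \<longleftrightarrow> queued Q x \<and> x \<noteq> j" for x
    using queued_pop_queue[OF pmlf_inv_queues_wf[OF inv] \<open>Q i \<noteq> []\<close>] \<open>j = hd (Q i)\<close> by simp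
  have unfinished: "unfinished_pieces ?S p x = unfinished_pieces S p x" for x
    using unfinished_pieces_step[of r j S, OF pmlf_inv_prefix_work[OF inv]] by simp
  show ?thesis
    unfolding pmlf_queue_inv_def
  proof (intro conjI allI impI)
    show "queues_wf ?Q" using queues_wf_pop[OF pmlf_inv_queues_wf[OF inv] \<open>Q i \<noteq> []\<close>] .
    show "finite {l. ?Q l \<noteq> []}"
      using pmlf_inv_finite[OF inv] by (rule finite_subset[rotated]) (auto simp: \<open>Q i \<noteq> []\<close>)
  next
    fix l x assume "x \<in> set (?Q l)"
    then have "x \<in> set (Q l)" "x \<noteq> j" unfolding set_Q by auto
    then show "x < n" "level_bound \<delta> l \<le> p x" "?r x \<le> level_bound \<delta> l" "?r x < p x"
      "int (unfinished_pieces ?S p x) + initial_level \<delta> ph x = l"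
      using pmlf_inv_queued[OF inv, of x l] by (simp_all add: unfinished)
  next
    fix x assume "x < n" "\<not> queued ?Q x"
    then show "?r x = p x" using pmlf_inv_finished[OF inv] queued by auto
  next
    fix l x y assume "x \<in> set (?Q l)" "queued ?Q y"
    then have "x \<in> set (Q l)" "queued Q y" "y \<noteq> j" unfolding set_Q queued by auto
    then show "?r y \<le> level_bound \<delta> (l + 1)"
      using pmlf_inv_received[OF inv, of x l y] by simp
  qed
qed

lemma pmlf_account_inv_complete:
  assumes inv: "pmlf_inv \<delta> p ph n Q r S" and "Q i \<noteq> []" "j = hd (Q i)"
  shows "pmlf_account_inv \<delta> p ph n (Q(i := tl (Q i))) (r(j := p j)) (S @ [(Some j, p j - r j)])"
proof -
  let ?Q = "Q(i := tl (Q i))" and ?r = "r(j := p j)" and ?S = "S @ [(Some j, p j - r j)]"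
  have queued: "queued ?Q x \<longleftrightarrow> queued Q x \<and> x \<noteq> j" for x
    using queued_pop_queue[OF pmlf_inv_queues_wf[OF inv] \<open>Q i \<noteq> []\<close>] \<open>j = hd (Q i)\<close> by simp
  have unfinished: "unfinished_pieces ?S p x = unfinished_pieces S p x" for x
    using unfinished_pieces_step[of r j S, OF pmlf_inv_prefix_work[OF inv]] by simp
  have "j \<in> set (Q i)" using assms(2,3) by simp
  then have j: "j < n" "r j < p j" using pmlf_inv_queued[OF inv] by blast+
  show ?thesis
    unfolding pmlf_account_inv_def
  proof (intro conjI allI impI)
    show "idle_free n ?S"
      using pmlf_inv_idle_free[OF inv] j(1) by (rule idle_free_snoc) (use j(2) in simp)
    show "length ?S = (\<Sum>x<n. unfinished_pieces ?S p x + (if queued ?Q x then 0 else 1))"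
      using pmlf_inv_length[OF inv] j(1)
      by (rule length_snoc_sum, unfold unfinished queued) (use \<open>j \<in> set (Q i)\<close> in auto)
  next
    fix x show "?r x = prefix_work ?S x (length ?S)"
      by (rule prefix_work_step[OF pmlf_inv_prefix_work[OF inv]])
  next
    fix x assume "x < n"
    then show "int (unfinished_pieces ?S p x) + initial_level \<delta> ph x \<le> log (1 + \<delta>) (p x)"
      using pmlf_inv_level_le_log[OF inv] by (simp add: unfinished)
  qed
qed

lemma pmlf_inv_complete:
  assumes "pmlf_inv \<delta> p ph n Q r S" "Q i \<noteq> []" "j = hd (Q i)"
  shows "pmlf_inv \<delta> p ph n (Q(i := tl (Q i))) (r(j := p j)) (S @ [(Some j, p j - r j)])"
  using pmlf_queue_inv_complete[OF assms] pmlf_account_inv_complete[OF assms]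
  unfolding pmlf_inv_def ..

lemma pmlf_queue_inv_demote:
  assumes inv: "pmlf_inv \<delta> p ph n Q r S" and "\<delta> > 0" and "Q i \<noteq> []" "j = hd (Q i)"
    and min: "\<forall>l. Q l \<noteq> [] \<longrightarrow> i \<le> l" and "T = level_bound \<delta> (i + 1)" "T < p j"
  shows "pmlf_queue_inv \<delta> p ph n (Q(i := tl (Q i), i + 1 := Q (i + 1) @ [j])) (r(j := T))
    (S @ [(Some j, T - r j)])"
proof -
  let ?Q = "Q(i := tl (Q i), i + 1 := Q (i + 1) @ [j])" and ?r = "r(j := T)" and ?S = "S @ [(Some j, T - r j)]"
  have set_Q: "set (?Q l) = set (Q l) - {j} \<union> (if l = i + 1 then {j} else {})" for l
    using set_move_queue_head[OF pmlf_inv_queues_wf[OF inv] \<open>Q i \<noteq> []\<close>, of "i + 1"] \<open>j = hd (Q i)\<close>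
    by simp
  have queued: "queued ?Q x \<longleftrightarrow> queued Q x" for x
    using queued_move_queue_head[OF pmlf_inv_queues_wf[OF inv] \<open>Q i \<noteq> []\<close>, of "i + 1"] \<open>j = hd (Q i)\<close>
    by simp
  have unfinished: "unfinished_pieces ?S p x = unfinished_pieces S p x + (if x = j then 1 else 0)" for x
    using unfinished_pieces_step[of r j S, OF pmlf_inv_prefix_work[OF inv]] \<open>T < p j\<close> by simp
  have "j \<in> set (Q i)" using assms(3,4) by simp
  then have j: "j < n" "int (unfinished_pieces S p j) + initial_level \<delta> ph j = i"
    using pmlf_inv_queued[OF inv] by blast+
  show ?thesis
    unfolding pmlf_queue_inv_def
  proof (intro conjI allI impI)
    show "queues_wf ?Q"
      using queues_wf_move[OF pmlf_inv_queues_wf[OF inv] \<open>Q i \<noteq> []\<close>, of "i + 1"] \<open>j = hd (Q i)\<close> by simp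
    show "finite {l. ?Q l \<noteq> []}"
      by (rule finite_subset[of _ "insert (i + 1) {l. Q l \<noteq> []}"]) (auto simp: pmlf_inv_finite[OF inv])
  next
    fix l x assume "x \<in> set (?Q l)"
    then consider "x \<in> set (Q l)" "x \<noteq> j" | "x = j" "l = i + 1" unfolding set_Q by (auto split: if_splits)
    then have "x < n \<and> level_bound \<delta> l \<le> p x \<and> ?r x \<le> level_bound \<delta> l \<and> ?r x < p x
      \<and> int (unfinished_pieces ?S p x) + initial_level \<delta> ph x = l"
    proof cases
      case 1
      then show ?thesis using pmlf_inv_queued[OF inv, of x l] by (simp add: unfinished)
    next
      case 2
      then show ?thesis using j \<open>T < p j\<close> unfinished[of j] \<open>T = level_bound \<delta> (i + 1)\<close> by simp
    qed
    then show "x < n" "level_bound \<delta> l \<le> p x" "?r x \<le> level_bound \<delta> l" "?r x < p x"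
      "int (unfinished_pieces ?S p x) + initial_level \<delta> ph x = l"
      by simp_all
  next
    fix x assume "x < n" "\<not> queued ?Q x"
    from \<open>\<not> queued ?Q x\<close> have "\<not> queued Q x" unfolding queued .
    moreover from this have "x \<noteq> j" using \<open>j \<in> set (Q i)\<close> by blast
    ultimately show "?r x = p x" using pmlf_inv_finished[OF inv \<open>x < n\<close>] by simp
  next
    fix l x y assume x: "x \<in> set (?Q l)" and y: "queued ?Q y"
    have "i \<le> l" using x min unfolding set_Q by (cases "l = i + 1") force+
    have "?r y \<le> T"
      using pmlf_inv_received[OF inv \<open>j \<in> set (Q i)\<close>] y \<open>T = level_bound \<delta> (i + 1)\<close>
      unfolding queued by simp
    also have "\<dots> \<le> level_bound \<delta> (l + 1)"
      using \<open>i \<le> l\<close> \<open>\<delta> > 0\<close> \<open>T = level_bound \<delta> (i + 1)\<close> by (simp add: level_bound_mono)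
    finally show "?r y \<le> level_bound \<delta> (l + 1)" .
  qed
qed

lemma pmlf_account_inv_demote:
  assumes inv: "pmlf_inv \<delta> p ph n Q r S" and "\<delta> > 0" and "Q i \<noteq> []" "j = hd (Q i)"
    and "T = level_bound \<delta> (i + 1)" "T < p j"
  shows "pmlf_account_inv \<delta> p ph n (Q(i := tl (Q i), i + 1 := Q (i + 1) @ [j])) (r(j := T))
    (S @ [(Some j, T - r j)])"
proof -
  let ?Q = "Q(i := tl (Q i), i + 1 := Q (i + 1) @ [j])" and ?r = "r(j := T)" and ?S = "S @ [(Some j, T - r j)]"
  have queued: "queued ?Q x \<longleftrightarrow> queued Q x" for x
    using queued_move_queue_head[OF pmlf_inv_queues_wf[OF inv] \<open>Q i \<noteq> []\<close>, of "i + 1"] \<open>j = hd (Q i)\<close>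
    by simp
  have unfinished: "unfinished_pieces ?S p x = unfinished_pieces S p x + (if x = j then 1 else 0)" for x
    using unfinished_pieces_step[of r j S, OF pmlf_inv_prefix_work[OF inv]] \<open>T < p j\<close> by simp
  have "j \<in> set (Q i)" using assms(3,4) by simp
  then have j: "j < n" "r j \<le> level_bound \<delta> i" "int (unfinished_pieces S p j) + initial_level \<delta> ph j = i"
    using pmlf_inv_queued[OF inv] by blast+
  have "level_bound \<delta> i \<le> T" "0 < T"
    using \<open>\<delta> > 0\<close> \<open>T = level_bound \<delta> (i + 1)\<close> by (auto intro: level_bound_mono)
  then have "0 < p j" using \<open>T < p j\<close> by linarith
  show ?thesis
    unfolding pmlf_account_inv_def
  proof (intro conjI allI impI)
    show "idle_free n ?S"
      using pmlf_inv_idle_free[OF inv] j(1) by (rule idle_free_snoc) (use j(2) \<open>level_bound \<delta> i \<le> T\<close> in simp)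
    show "length ?S = (\<Sum>x<n. unfinished_pieces ?S p x + (if queued ?Q x then 0 else 1))"
      using pmlf_inv_length[OF inv] j(1) by (rule length_snoc_sum, unfold unfinished queued) simp
  next
    fix x show "?r x = prefix_work ?S x (length ?S)"
      by (rule prefix_work_step[OF pmlf_inv_prefix_work[OF inv]])
  next
    fix x assume "x < n"
    have "real_of_int (i + 1) < log (1 + \<delta>) (p j)"
      using \<open>T < p j\<close> \<open>0 < p j\<close> \<open>\<delta> > 0\<close> \<open>T = level_bound \<delta> (i + 1)\<close> by (subst less_log_iff) auto
    then show "int (unfinished_pieces ?S p x) + initial_level \<delta> ph x \<le> log (1 + \<delta>) (p x)"
      using pmlf_inv_level_le_log[OF inv \<open>x < n\<close>] j(3) by (auto simp: unfinished)
  qed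
qed

lemma pmlf_inv_demote:
  assumes "pmlf_inv \<delta> p ph n Q r S" "\<delta> > 0" "Q i \<noteq> []" "j = hd (Q i)"
    and "\<forall>l. Q l \<noteq> [] \<longrightarrow> i \<le> l" "level_bound \<delta> (i + 1) < p j"
  shows "pmlf_inv \<delta> p ph n (Q(i := tl (Q i), i + 1 := Q (i + 1) @ [j]))
    (r(j := level_bound \<delta> (i + 1))) (S @ [(Some j, level_bound \<delta> (i + 1) - r j)])"
  using pmlf_queue_inv_demote[OF assms(1-5) refl assms(6)] pmlf_account_inv_demote[OF assms(1-4) refl assms(6)]
  unfolding pmlf_inv_def ..

lemma pmlf_inv_step:
  assumes inv: "pmlf_inv \<delta> p ph n Q r S" and "\<delta> > 0"
  shows "case pmlf_step \<delta> p (Q, r, S) of (Q', r', S') \<Rightarrow> pmlf_inv \<delta> p ph n Q' r' S'"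
proof (cases "\<exists>l. Q l \<noteq> []")
  case False
  then show ?thesis using inv by (simp add: pmlf_step_def)
next
  case True
  then show ?thesis
  proof (rule pmlf_step_cases[OF pmlf_inv_finite[OF inv], where \<delta> = \<delta> and p = p and r = r and S = S])
    fix i j
    assume "Q i \<noteq> []" "j = hd (Q i)"
      and step: "pmlf_step \<delta> p (Q, r, S) = (Q(i := tl (Q i)), r(j := p j), S @ [(Some j, p j - r j)])"
    then show ?thesis using pmlf_inv_complete[OF inv] by (simp only: step prod.case)
  next
    fix i j
    assume "Q i \<noteq> []" "j = hd (Q i)" "\<forall>l. Q l \<noteq> [] \<longrightarrow> i \<le> l" "level_bound \<delta> (i + 1) < p j"
      and step: "pmlf_step \<delta> p (Q, r, S) = (Q(i := tl (Q i), i + 1 := Q (i + 1) @ [j]),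
        r(j := level_bound \<delta> (i + 1)), S @ [(Some j, level_bound \<delta> (i + 1) - r j)])"
    then show ?thesis using pmlf_inv_demote[OF inv \<open>\<delta> > 0\<close>] by (simp only: step prod.case)
  qed
qed

section \<open>Runs of PMLF\<close>

lemma pmlf_step_done: "pmlf_done st \<Longrightarrow> pmlf_step \<delta> p st = st"
  by (cases st) (auto simp: pmlf_step_def pmlf_done_def)

locale pmlf_run =
  fixes \<delta> :: real and p ph :: "nat \<Rightarrow> real" and n :: nat and ord :: "nat list"
  assumes delta_pos: "\<delta> > 0"
    and job_bounds: "\<forall>j<n. 1 \<le> p j \<and> 0 < ph j \<and> ph j \<le> p j"
    and distinct_ord: "distinct ord" and set_ord: "set ord = {..<n}"
begin

abbreviation "state s \<equiv> pmlf_state \<delta> p ph ord s"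
abbreviation "queues s \<equiv> fst (state s)"
abbreviation "received s \<equiv> fst (snd (state s))"
abbreviation "sched s \<equiv> snd (snd (state s))"

lemma state_Suc: "state (Suc s) = pmlf_step \<delta> p (state s)"
  by (simp add: pmlf_state_def)

lemma state_done_Suc: "pmlf_done (state s) \<Longrightarrow> state (Suc s) = state s"
  by (simp add: state_Suc pmlf_step_done)

lemma state_done_le:
  assumes "pmlf_done (state s)" "s \<le> t"
  shows "state t = state s"
  using assms(2) by (induction t rule: dec_induct) (use assms(1) in \<open>auto simp: state_done_Suc\<close>)

lemma pmlf_inv_state: "pmlf_inv \<delta> p ph n (queues s) (received s) (sched s)"
proof (induction s)
  case 0
  show ?case using pmlf_inv_init[OF delta_pos job_bounds distinct_ord set_ord] by (simp add: pmlf_state_def)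
next
  case (Suc s)
  obtain Q r S where "state s = (Q, r, S)" by (cases "state s")
  then show ?case
    using Suc.IH pmlf_inv_step[of \<delta> p ph n Q r S] delta_pos by (auto simp: state_Suc split: prod.splits)
qed

lemma state_step:
  assumes "\<not> pmlf_done (state s)"
  obtains i j where "queues s i \<noteq> []" "j = hd (queues s i)" "\<forall>l. queues s l \<noteq> [] \<longrightarrow> i \<le> l"
      "p j \<le> level_bound \<delta> (i + 1)"
      "state (Suc s) = ((queues s)(i := tl (queues s i)), (received s)(j := p j),
         sched s @ [(Some j, p j - received s j)])"
  | i j where "queues s i \<noteq> []" "j = hd (queues s i)" "\<forall>l. queues s l \<noteq> [] \<longrightarrow> i \<le> l"
      "level_bound \<delta> (i + 1) < p j"
      "state (Suc s) = ((queues s)(i := tl (queues s i), i + 1 := queues s (i + 1) @ [j]),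
         (received s)(j := level_bound \<delta> (i + 1)), sched s @ [(Some j, level_bound \<delta> (i + 1) - received s j)])"
proof -
  have "\<exists>l. queues s l \<noteq> []" using assms by (simp add: pmlf_done_def)
  then show ?thesis
  proof (rule pmlf_step_cases[OF pmlf_inv_finite[OF pmlf_inv_state],
        where \<delta> = \<delta> and p = p and r = "received s" and S = "sched s"])
    fix i j
    assume "queues s i \<noteq> []" "j = hd (queues s i)" "\<forall>l. queues s l \<noteq> [] \<longrightarrow> i \<le> l"
      "p j \<le> level_bound \<delta> (i + 1)"
      and "pmlf_step \<delta> p (queues s, received s, sched s) =
        ((queues s)(i := tl (queues s i)), (received s)(j := p j), sched s @ [(Some j, p j - received s j)])"
    then show ?thesis using that(1) by (simp add: state_Suc)
  next
    fix i j
    assume "queues s i \<noteq> []" "j = hd (queues s i)" "\<forall>l. queues s l \<noteq> [] \<longrightarrow> i \<le> l"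
      "level_bound \<delta> (i + 1) < p j"
      and "pmlf_step \<delta> p (queues s, received s, sched s) =
        ((queues s)(i := tl (queues s i), i + 1 := queues s (i + 1) @ [j]),
         (received s)(j := level_bound \<delta> (i + 1)), sched s @ [(Some j, level_bound \<delta> (i + 1) - received s j)])"
    then show ?thesis using that(2) by (simp add: state_Suc)
  qed
qed

lemma sched_Suc: "\<not> pmlf_done (state s) \<Longrightarrow> \<exists>e. sched (Suc s) = sched s @ [e]"
  by (cases rule: state_step) auto

lemma queued_Suc:
  assumes "queued (queues (Suc s)) x"
  shows "queued (queues s) x"
proof (cases "pmlf_done (state s)")
  case True
  then show ?thesis using assms by (simp add: state_done_Suc)
next
  case False
  note wf = pmlf_inv_queues_wf[OF pmlf_inv_state[of s]]
  from False show ?thesis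
  proof (cases rule: state_step)
    case (1 i j)
    then have "queues (Suc s) = (queues s)(i := tl (queues s i))" by simp
    with assms show ?thesis using queued_pop_queue[OF wf \<open>queues s i \<noteq> []\<close>] by metis
  next
    case (2 i j)
    then have "queues (Suc s) = (queues s)(i := tl (queues s i), i + 1 := queues s (i + 1) @ [hd (queues s i)])"
      by simp
    then have "queued (queues (Suc s)) x \<longleftrightarrow> queued (queues s) x"
      using queued_move_queue_head[OF wf \<open>queues s i \<noteq> []\<close>, of "i + 1"] by simp
    then show ?thesis using assms by blast
  qed
qed

lemma queued_le:
  assumes "queued (queues t) x" "s \<le> t"
  shows "queued (queues s) x"
  using assms(2,1)
proof (induction t rule: dec_induct)
  case (step t)
  then show ?case using queued_Suc by blast
qed

lemma leaves_queue:
  assumes "queued (queues s) x" "\<not> queued (queues (Suc s)) x"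
  obtains i where "queues s i \<noteq> []" "x = hd (queues s i)" "\<forall>l. queues s l \<noteq> [] \<longrightarrow> i \<le> l"
    "p x \<le> level_bound \<delta> (i + 1)" "received (Suc s) = (received s)(x := p x)"
proof -
  have "\<not> pmlf_done (state s)" using assms state_done_Suc by force
  note wf = pmlf_inv_queues_wf[OF pmlf_inv_state[of s]]
  from \<open>\<not> pmlf_done (state s)\<close> show ?thesis
  proof (cases rule: state_step)
    case (1 i j)
    then have "queues (Suc s) = (queues s)(i := tl (queues s i))" by simp
    with assms have "x = j" using queued_pop_queue[OF wf \<open>queues s i \<noteq> []\<close>] \<open>j = hd (queues s i)\<close>
      by metis
    then show ?thesis using that 1 by simp
  next
    case (2 i j)
    then have "queues (Suc s) = (queues s)(i := tl (queues s i), i + 1 := queues s (i + 1) @ [hd (queues s i)])"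
      by simp
    then have "queued (queues (Suc s)) x \<longleftrightarrow> queued (queues s) x"
      using queued_move_queue_head[OF wf \<open>queues s i \<noteq> []\<close>, of "i + 1"] by simp
    then show ?thesis using assms by blast
  qed
qed

end

context pmlf_run
begin

lemma sched_mono:
  assumes "s \<le> t"
  shows "\<exists>ys. sched t = sched s @ ys"
  using assms
proof (induction t rule: dec_induct)
  case (step t)
  then show ?case using state_done_Suc sched_Suc by (cases "pmlf_done (state t)") force+
qed simp

lemma sched_prefix:
  assumes "pmlf_done (state K)"
  shows "\<exists>ys. sched K = sched s @ ys"
proof (cases "s \<le> K")
  case False
  then show ?thesis using state_done_le[OF assms, of s] by simp
qed (rule sched_mono)

lemma length_sched: "\<forall>s'<s. \<not> pmlf_done (state s') \<Longrightarrow> length (sched s) = s"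
proof (induction s)
  case (Suc s)
  then obtain e where "sched (Suc s) = sched s @ [e]" using sched_Suc by blast
  then show ?case using Suc by simp
qed (simp add: pmlf_state_def)

theorem pmlf_terminates: "\<exists>K. pmlf_done (state K)"
proof (rule ccontr)
  assume never: "\<nexists>K. pmlf_done (state K)"
  define B where "B = (\<Sum>x<n. nat (\<lfloor>log (1 + \<delta>) (p x)\<rfloor> - initial_level \<delta> ph x) + 1)"
  note inv = pmlf_inv_state[of "Suc B"]
  have unfinished_le: "unfinished_pieces (sched (Suc B)) p x \<le> nat (\<lfloor>log (1 + \<delta>) (p x)\<rfloor> - initial_level \<delta> ph x)"
    if "x < n" for x
  proof -
    have "int (unfinished_pieces (sched (Suc B)) p x) + initial_level \<delta> ph x \<le> \<lfloor>log (1 + \<delta>) (p x)\<rfloor>"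
      using pmlf_inv_level_le_log[OF inv that] by (simp add: le_floor_iff)
    then show ?thesis by linarith
  qed
  then have "length (sched (Suc B)) \<le> (\<Sum>x<n. nat (\<lfloor>log (1 + \<delta>) (p x)\<rfloor> - initial_level \<delta> ph x) + 1)"
    unfolding pmlf_inv_length[OF inv] by (intro sum_mono add_mono) (auto intro: unfinished_le)
  then have "length (sched (Suc B)) \<le> B" by (simp add: B_def)
  then show False using length_sched[of "Suc B"] never by simp
qed

lemma leave_step_exists:
  assumes "pmlf_done (state K)" "x < n"
  shows "\<exists>a. queued (queues a) x \<and> \<not> queued (queues (Suc a)) x"
proof -
  have "x \<in> set (queues 0 (initial_level \<delta> ph x))"
    using assms(2) set_ord by (simp add: pmlf_state_def init_queues_def initial_level_def)
  moreover have "\<not> queued (queues K) x" using assms(1) by (simp add: pmlf_done_def)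
  ultimately show ?thesis
    using ex_least_nat_less[where P = "\<lambda>a. \<not> queued (queues a) x" and n = K] by blast
qed

lemma received_at_leave:
  assumes "queued (queues a) j" "\<not> queued (queues (Suc a)) j" "queued (queues a) k" "k \<noteq> j"
  shows "received (Suc a) k \<le> min (p k) ((1 + \<delta>) * p j)" and "p j \<le> (1 + \<delta>) * p k"
proof -
  note inv = pmlf_inv_state[of a]
  obtain i where "queues a i \<noteq> []" "j = hd (queues a i)" and min: "\<forall>l. queues a l \<noteq> [] \<longrightarrow> i \<le> l"
    and "p j \<le> level_bound \<delta> (i + 1)" and received: "received (Suc a) = (received a)(j := p j)"
    by (rule leaves_queue[OF assms(1,2)])
  then have "j \<in> set (queues a i)" by simp
  obtain l where "k \<in> set (queues a l)" using assms(3) by blast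
  then have "i \<le> l" using min by (metis empty_iff empty_set)
  have k: "level_bound \<delta> l \<le> p k" "received a k < p k"
    using pmlf_inv_queued[OF inv \<open>k \<in> set (queues a l)\<close>] by auto
  have "level_bound \<delta> i \<le> p j" using pmlf_inv_queued[OF inv \<open>j \<in> set (queues a i)\<close>] by simp
  have "received a k \<le> level_bound \<delta> (i + 1)"
    using pmlf_inv_received[OF inv \<open>j \<in> set (queues a i)\<close> assms(3)] .
  also have "\<dots> = (1 + \<delta>) * level_bound \<delta> i" using delta_pos by (intro level_bound_succ) simp
  also have "\<dots> \<le> (1 + \<delta>) * p j"
    using \<open>level_bound \<delta> i \<le> p j\<close> delta_pos by (intro mult_left_mono) auto
  finally show "received (Suc a) k \<le> min (p k) ((1 + \<delta>) * p j)"
    using k(2) received assms(4) by simp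
  have "p j \<le> level_bound \<delta> (i + 1)" by fact
  also have "\<dots> = (1 + \<delta>) * level_bound \<delta> i" using delta_pos by (intro level_bound_succ) simp
  also have "\<dots> \<le> (1 + \<delta>) * p k"
  proof -
    have "level_bound \<delta> i \<le> level_bound \<delta> l" using \<open>i \<le> l\<close> delta_pos by (intro level_bound_mono) auto
    then have "level_bound \<delta> i \<le> p k" using k(1) by (rule order_trans)
    then show ?thesis using delta_pos by (intro mult_left_mono) auto
  qed
  finally show "p j \<le> (1 + \<delta>) * p k" .
qed

context
  fixes K assumes done_K: "pmlf_done (state K)"
begin

lemma received_final: "x < n \<Longrightarrow> received K x = p x"
  using pmlf_inv_finished[OF pmlf_inv_state] done_K by (simp add: pmlf_done_def)

lemma nonneg_pieces_final: "nonneg_pieces (sched K)"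
  using pmlf_inv_idle_free[OF pmlf_inv_state] by (simp add: idle_free_def)

lemma work_final_le: "x < n \<Longrightarrow> work (sched K) x t \<le> p x"
  using work_le_prefix_work[OF nonneg_pieces_final] pmlf_inv_prefix_work[OF pmlf_inv_state]
    received_final by metis

lemma work_final_step_end:
  "work (sched K) x (seg_start (sched K) (length (sched a))) = received a x"
proof -
  obtain ys where ys: "sched K = sched a @ ys" using sched_prefix[OF done_K] by blast
  then have "work (sched K) x (seg_start (sched K) (length (sched a))) = prefix_work (sched a) x (length (sched a))"
    using work_seg_start[OF nonneg_pieces_final] prefix_work_append by simp
  then show ?thesis using pmlf_inv_prefix_work[OF pmlf_inv_state] by simp
qed

lemma feasible_final: "feasible n p (sched K)"
  using nonneg_pieces_final work_final_step_end[of _ K] received_final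
  by (simp add: feasible_def nonneg_pieces_def total_len_eq_seg_start)

lemma completion_final_le:
  assumes "queued (queues a) x" "\<not> queued (queues (Suc a)) x"
  shows "completion (sched K) p x \<le> seg_start (sched K) (length (sched (Suc a)))"
proof (rule completion_le)
  obtain ys where "sched K = sched (Suc a) @ ys" using sched_prefix[OF done_K] by blast
  then show "0 \<le> seg_start (sched K) (length (sched (Suc a)))"
    using seg_start_nonneg[OF nonneg_pieces_final] by simp
  have "received (Suc a) x = p x" by (rule leaves_queue[OF assms]) simp
  then show "p x \<le> work (sched K) x (seg_start (sched K) (length (sched (Suc a))))"
    by (simp add: work_final_step_end)
qed

lemma completion_pair_final:
  assumes "j < n" "k < n" "j \<noteq> k"
  shows "work (sched K) k (completion (sched K) p j) + work (sched K) j (completion (sched K) p k)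
    \<le> (2 + \<delta>) * min (p j) (p k)"
proof -
  let ?C = "completion (sched K) p"
  have ordered: "work (sched K) k (?C j) + work (sched K) j (?C k) \<le> (2 + \<delta>) * min (p j) (p k)"
    if "j < n" "queued (queues a) j" "\<not> queued (queues (Suc a)) j" "queued (queues a) k" "k \<noteq> j" for j k a
  proof -
    have "work (sched K) k (?C j) \<le> received (Suc a) k"
      using work_mono[OF completion_final_le[OF that(2,3)], of "sched K" k] by (simp add: work_final_step_end)
    then have "work (sched K) k (?C j) \<le> min (p k) ((1 + \<delta>) * p j)"
      using received_at_leave(1)[OF that(2-5)] by linarith
    then have "work (sched K) k (?C j) + work (sched K) j (?C k) \<le> (1 + (1 + \<delta>)) * min (p j) (p k)"
      using work_final_le[OF that(1)] received_at_leave(2)[OF that(2-5)] by (intro pair_work_bound)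
    then show ?thesis by simp
  qed
  obtain aj where aj: "queued (queues aj) j" "\<not> queued (queues (Suc aj)) j"
    using leave_step_exists[OF done_K assms(1)] by blast
  obtain ak where ak: "queued (queues ak) k" "\<not> queued (queues (Suc ak)) k"
    using leave_step_exists[OF done_K assms(2)] by blast
  show ?thesis
  proof (cases "aj \<le> ak")
    case True
    then show ?thesis using ordered[OF assms(1) aj queued_le[OF ak(1)]] assms(3) by blast
  next
    case False
    then show ?thesis using ordered[OF assms(2) ak queued_le[OF aj(1)]] assms(3)
      by (simp add: add.commute min.commute)
  qed
qed

theorem total_completion_final_le:
  assumes "feasible n p S"
  shows "total_completion n p (sched K) \<le> (2 + \<delta>) * total_completion n p S"
proof -
  have "2 * total_completion n p (sched K) \<le> (2 + \<delta>) * spt_bound n p"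
  proof (rule total_completion_le_spt_bound)
    show "idle_free n (sched K)" by (rule pmlf_inv_idle_free[OF pmlf_inv_state])
    show "\<forall>j<n. p j \<le> work (sched K) j (total_len (sched K))"
      using feasible_final by (simp add: feasible_def)
    show "\<forall>j<n. 0 \<le> p j" using job_bounds by force
  qed (use work_final_le completion_pair_final delta_pos in auto)
  also have "\<dots> \<le> (2 + \<delta>) * (2 * total_completion n p S)"
    using spt_bound_le_total_completion[OF assms] delta_pos by (intro mult_left_mono) auto
  finally show ?thesis by simp
qed

lemma npreempt_final:
  assumes "j < n"
  shows "real (npreempt (sched K) p j) \<le> (1 + \<delta>) * (1 + log 2 (p j / ph j) / \<delta>)"
proof -
  have p: "1 \<le> p j" "0 < ph j" "ph j \<le> p j" using job_bounds assms by auto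
  have "real (npreempt (sched K) p j) \<le> unfinished_pieces (sched K) p j"
    using npreempt_le_unfinished_pieces[OF nonneg_pieces_final] by simp
  also have "\<dots> \<le> log (1 + \<delta>) (p j) - initial_level \<delta> ph j"
    using pmlf_inv_level_le_log[OF pmlf_inv_state[of K] assms] by simp
  also have "\<dots> \<le> log (1 + \<delta>) (p j / ph j) + 1"
  proof -
    have "log (1 + \<delta>) (ph j) - 1 < initial_level \<delta> ph j" unfolding initial_level_def by linarith
    moreover have "log (1 + \<delta>) (p j / ph j) = log (1 + \<delta>) (p j) - log (1 + \<delta>) (ph j)"
      using p delta_pos by (simp add: log_divide)
    ultimately show ?thesis by linarith
  qed
  also have "\<dots> \<le> (1 + \<delta>) * (log 2 (p j / ph j) / \<delta>) + 1"
    using log_le_log2[OF delta_pos, of "p j / ph j"] p by simp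
  also have "\<dots> \<le> (1 + \<delta>) * (1 + log 2 (p j / ph j) / \<delta>)"
    using delta_pos by (simp add: algebra_simps)
  finally show ?thesis .
qed

end

end

theorem mainTheorem1:
  fixes \<delta> :: real
  assumes "\<delta> > 0"
  shows "\<exists>C>0. \<forall>(n::nat) (p::nat \<Rightarrow> real) (ph::nat \<Rightarrow> real) (ord::nat list).
     (\<forall>j<n. 1 \<le> p j \<and> 0 < ph j \<and> ph j \<le> p j) \<and> distinct ord \<and> set ord = {..<n} \<longrightarrow>
       (\<exists>k. pmlf_done (pmlf_state \<delta> p ph ord k)) \<and>
       (\<forall>k. pmlf_done (pmlf_state \<delta> p ph ord k) \<longrightarrow>
          (let S = pmlf_sched (pmlf_state \<delta> p ph ord k) in
             feasible n p S \<and>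
             (\<forall>S'. feasible n p S' \<longrightarrow> total_completion n p S \<le> (2 + 2 * \<delta>) * total_completion n p S') \<and>
             (\<forall>j<n. real (npreempt S p j) \<le> C * (1 + log 2 (p j / ph j) / \<delta>))))"
proof (intro exI[of _ "1 + \<delta>"] conjI allI impI)
  show "0 < 1 + \<delta>" using assms by simp
  fix n :: nat and p ph :: "nat \<Rightarrow> real" and ord :: "nat list"
  assume "(\<forall>j<n. 1 \<le> p j \<and> 0 < ph j \<and> ph j \<le> p j) \<and> distinct ord \<and> set ord = {..<n}"
  then interpret pmlf_run \<delta> p ph n ord using assms by unfold_locales auto
  show "\<exists>k. pmlf_done (state k)" by (rule pmlf_terminates)
  fix k assume done_k: "pmlf_done (state k)"
  have "total_completion n p (sched k) \<le> (2 + 2 * \<delta>) * total_completion n p S" if "feasible n p S" for S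
  proof -
    have "total_completion n p (sched k) \<le> (2 + \<delta>) * total_completion n p S"
      by (rule total_completion_final_le[OF done_k that])
    also have "\<dots> \<le> (2 + 2 * \<delta>) * total_completion n p S"
      using total_completion_nonneg[OF that] assms by (intro mult_right_mono) auto
    finally show ?thesis .
  qed
  then show "let S = pmlf_sched (state k) in
      feasible n p S \<and>
      (\<forall>S'. feasible n p S' \<longrightarrow> total_completion n p S \<le> (2 + 2 * \<delta>) * total_completion n p S') \<and>
      (\<forall>j<n. real (npreempt S p j) \<le> (1 + \<delta>) * (1 + log 2 (p j / ph j) / \<delta>))"
    using feasible_final[OF done_k] npreempt_final[OF done_k] by (simp add: pmlf_sched_def)
qed

end
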